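(* In an $m$-partial SCS the number of robots in a given ring remains invariant over time. If the length of a ring is $2l\pi$ (with $l$ a positive integer), then it contains at most $l$ robots. Furthermore, in an SCS from which no robot has left, a ring of length $2l\pi$ contains exactly $l$ robots, each at distance $2\pi$ (along the ring) from the next.
   Context: Let $T=\{C_1,\dots,C_n\}$ be pairwise disjoint unit circles in the plane (trajectories) and $\epsilon<0.5$ a communication range. The graph of potential links $G_\epsilon(T)$ has the circle centers as nodes and an edge $\{i,j\}$ whenever the centers of $C_i,C_j$ are at distance at most $2+\epsilon$; it is assumed connected. Points of a circle are identified with angles (modulo $2\pi$), and a robot traverses a circle in one time unit. A schedule is a pair $(f,g)$, $f:T\to[0,2\pi)$, $g:T\to\{-1,1\}$ ($1$ = counterclockwise); the robot on $C_i$ is at angle $f(C_i)+2\pi g(C_i)t$ at time $t$. A communication graph $G=(V,E)$ is a connected spanning subgraph of $G_\epsilon(T)$. The link position $\phi_{ij}$ is the point of $C_i$ closest to $C_j$. A schedule is $G$-synchronized if for every $\{i,j\}\in E$ the robot on $C_i$ is at $\phi_{ij}$ exactly when the robot on $C_j$ is at $\phi_{ji}$. An SCS with communication graph $G$ consists of $n$ robots, one per circle, moving under a $G$-synchronized schedule with $g(C_i)=-g(C_j)$ for all $\{i,j\}\in E$. Shifting protocol: when a robot on $C_i$ reaches $\phi_{ij}$ and there is no robot at $\phi_{ji}$, it moves to $C_j$ and thereafter follows the schedule of $C_j$. An $m$-partial SCS is obtained by removing $n-m$ robots, the remaining $m$ applying the shifting protocol. A ring is the closed path (locus of points) traversed by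 a robot that follows the assigned direction on each circle and always shifts to the neighboring circle at link positions; rings are pairwise disjoint and each arc of a circle between consecutive link positions lies in exactly one ring. The length of a ring or of a path along it is the total length of the circle arcs traversed (ignoring transitions between circles); ring lengths are positive integer multiples of $2\pi$. A robot is in a ring if its current position lies on that ring. *)

theory Defs
  imports "HOL-Analysis.Analysis"
begin

text \<open>Circles C_i (i < n) are the unit circles sphere (c i) 1 in the complex plane.
Angles are reals, compared modulo 2 pi.\<close>

definition angeq :: "real \<Rightarrow> real \<Rightarrow> bool" where
  "angeq a b \<longleftrightarrow> (\<exists>k::int. a - b = 2 * pi * of_int k)"

definition nang :: "real \<Rightarrow> real" where
  "nang a = a - 2 * pi * of_int \<lfloor>a / (2 * pi)\<rfloor>"

text \<open>angle of the robot following the schedule (f,g) of circle i at time t\<close>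
definition sched :: "(nat \<Rightarrow> real) \<Rightarrow> (nat \<Rightarrow> real) \<Rightarrow> nat \<Rightarrow> real \<Rightarrow> real" where
  "sched f g i t = f i + 2 * pi * g i * t"

text \<open>link position phi_ij: angle on C_i of the point of C_i closest to C_j\<close>
definition linkpos :: "(nat \<Rightarrow> complex) \<Rightarrow> nat \<Rightarrow> nat \<Rightarrow> real" where
  "linkpos c i j = Arg (c j - c i)"

definition potential_links :: "(nat \<Rightarrow> complex) \<Rightarrow> nat \<Rightarrow> real \<Rightarrow> (nat \<times> nat) set" where
  "potential_links c n eps =
     {(i, j). i < n \<and> j < n \<and> i \<noteq> j \<and> dist (c i) (c j) \<le> 2 + eps}"

definition connected_on :: "nat \<Rightarrow> (nat \<times> nat) set \<Rightarrow> bool" where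
  "connected_on n E \<longleftrightarrow> (\<forall>i<n. \<forall>j<n. (i, j) \<in> E\<^sup>*)"

text \<open>Standing setting of an SCS: disjoint unit circles, communication range eps < 0.5,
connected G_eps(T), communication graph E (connected spanning subgraph, edges stored
symmetrically), G-synchronized schedule (f,g) with opposite directions along edges.\<close>
definition SCS_setting ::
  "(nat \<Rightarrow> complex) \<Rightarrow> nat \<Rightarrow> real \<Rightarrow> (nat \<times> nat) set \<Rightarrow> (nat \<Rightarrow> real) \<Rightarrow> (nat \<Rightarrow> real) \<Rightarrow> bool"
where
  "SCS_setting c n eps E f g \<longleftrightarrow>
     (\<forall>i<n. \<forall>j<n. i \<noteq> j \<longrightarrow> sphere (c i) 1 \<inter> sphere (c j) 1 = {}) \<and>
     eps < 1/2 \<and>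
     connected_on n (potential_links c n eps) \<and>
     E \<subseteq> potential_links c n eps \<and> sym E \<and> connected_on n E \<and>
     (\<forall>i<n. 0 \<le> f i \<and> f i < 2 * pi \<and> (g i = 1 \<or> g i = -1)) \<and>
     (\<forall>(i, j)\<in>E. \<forall>t. angeq (sched f g i t) (linkpos c i j) \<longleftrightarrow>
                       angeq (sched f g j t) (linkpos c j i)) \<and>
     (\<forall>(i, j)\<in>E. g i = - g j)"

definition left_const :: "(real \<Rightarrow> nat) \<Rightarrow> real \<Rightarrow> nat \<Rightarrow> bool" where
  "left_const x t i \<longleftrightarrow> (\<exists>\<delta>>0. \<forall>s. t - \<delta> < s \<and> s < t \<longrightarrow> x s = i)"

definition right_const :: "(real \<Rightarrow> nat) \<Rightarrow> real \<Rightarrow> bool" where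
  "right_const x t \<longleftrightarrow> (\<exists>\<delta>>0. \<forall>s. t \<le> s \<and> s < t + \<delta> \<longrightarrow> x s = x t)"

definition prior :: "(nat \<Rightarrow> nat) \<Rightarrow> (nat \<Rightarrow> real \<Rightarrow> nat) \<Rightarrow> nat \<Rightarrow> real \<Rightarrow> nat \<Rightarrow> bool" where
  "prior init pos r t i \<longleftrightarrow> (t = 0 \<and> i = init r) \<or> (t > 0 \<and> left_const (pos r) t i)"

definition may_shift ::
  "(nat \<Rightarrow> complex) \<Rightarrow> (nat \<times> nat) set \<Rightarrow> (nat \<Rightarrow> real) \<Rightarrow> (nat \<Rightarrow> real) \<Rightarrow>
   nat set \<Rightarrow> (nat \<Rightarrow> nat) \<Rightarrow> (nat \<Rightarrow> real \<Rightarrow> nat) \<Rightarrow> real \<Rightarrow> nat \<Rightarrow> nat \<Rightarrow> bool"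
where
  "may_shift c E f g R init pos t i j \<longleftrightarrow>
     (i, j) \<in> E \<and> angeq (sched f g i t) (linkpos c i j) \<and>
     \<not> (\<exists>r'\<in>R. prior init pos r' t j \<and> angeq (sched f g j t) (linkpos c j i))"

text \<open>A partial SCS: the robots R (finitely many, initially on distinct circles, i.e. an SCS
from which some robots were removed at time 0) move following the schedule of their current
circle, pos r t being the circle of robot r at time t >= 0 (after any shift at time t),
and apply the shifting protocol.\<close>
definition partial_SCS_run ::
  "(nat \<Rightarrow> complex) \<Rightarrow> nat \<Rightarrow> (nat \<times> nat) set \<Rightarrow> (nat \<Rightarrow> real) \<Rightarrow> (nat \<Rightarrow> real) \<Rightarrow>
   nat set \<Rightarrow> (nat \<Rightarrow> nat) \<Rightarrow> (nat \<Rightarrow> real \<Rightarrow> nat) \<Rightarrow> bool"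
where
  "partial_SCS_run c n E f g R init pos \<longleftrightarrow>
     finite R \<and> inj_on init R \<and> init ` R \<subseteq> {..<n} \<and>
     (\<forall>r\<in>R. \<forall>t\<ge>0. pos r t < n \<and> right_const (pos r) t) \<and>
     (\<forall>r\<in>R. \<forall>t>0. \<exists>i. left_const (pos r) t i) \<and>
     (\<forall>r\<in>R. \<forall>t\<ge>0. \<forall>i. prior init pos r t i \<longrightarrow>
        ((\<exists>j. may_shift c E f g R init pos t i j) \<longrightarrow> may_shift c E f g R init pos t i (pos r t)) \<and>
        ((\<not> (\<exists>j. may_shift c E f g R init pos t i j)) \<longrightarrow> pos r t = i))"

definition pt :: "(nat \<Rightarrow> real) \<Rightarrow> (nat \<Rightarrow> real) \<Rightarrow> nat \<Rightarrow> real \<Rightarrow> nat \<times> real" where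
  "pt f g i t = (i, nang (sched f g i t))"

text \<open>A robot that always shifts at link positions, starting at time t0 on circle i0
(at the schedule position of C_i0; every point of C_i0 is such a position at some time).\<close>
definition shift_run ::
  "(nat \<Rightarrow> complex) \<Rightarrow> nat \<Rightarrow> (nat \<times> nat) set \<Rightarrow> (nat \<Rightarrow> real) \<Rightarrow> (nat \<Rightarrow> real) \<Rightarrow>
   (real \<Rightarrow> nat) \<Rightarrow> real \<Rightarrow> nat \<Rightarrow> bool"
where
  "shift_run c n E f g x t0 i0 \<longleftrightarrow>
     x t0 = i0 \<and>
     (\<forall>t\<ge>t0. x t < n \<and> right_const x t) \<and>
     (\<forall>t>t0. \<exists>i. left_const x t i) \<and>
     (\<forall>t>t0. \<forall>i. left_const x t i \<longrightarrow>
        ((\<exists>j. (i, j) \<in> E \<and> angeq (sched f g i t) (linkpos c i j)) \<longrightarrow>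
            (i, x t) \<in> E \<and> angeq (sched f g i t) (linkpos c i (x t))) \<and>
        ((\<not> (\<exists>j. (i, j) \<in> E \<and> angeq (sched f g i t) (linkpos c i j))) \<longrightarrow> x t = i))"

definition orbit :: "(nat \<Rightarrow> real) \<Rightarrow> (nat \<Rightarrow> real) \<Rightarrow> (real \<Rightarrow> nat) \<Rightarrow> real \<Rightarrow> (nat \<times> real) set" where
  "orbit f g x t0 = {pt f g (x t) t | t. t \<ge> t0}"

definition is_ring ::
  "(nat \<Rightarrow> complex) \<Rightarrow> nat \<Rightarrow> (nat \<times> nat) set \<Rightarrow> (nat \<Rightarrow> real) \<Rightarrow> (nat \<Rightarrow> real) \<Rightarrow>
   (nat \<times> real) set \<Rightarrow> bool"
where
  "is_ring c n E f g P \<longleftrightarrow>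
     (\<exists>i<n. \<exists>t0 x. shift_run c n E f g x t0 i \<and> P = orbit f g x t0)"

text \<open>Length of a ring: arc length (2 pi per time unit) traversed until first return.\<close>
definition ring_length ::
  "(nat \<Rightarrow> complex) \<Rightarrow> nat \<Rightarrow> (nat \<times> nat) set \<Rightarrow> (nat \<Rightarrow> real) \<Rightarrow> (nat \<Rightarrow> real) \<Rightarrow>
   (nat \<times> real) set \<Rightarrow> real \<Rightarrow> bool"
where
  "ring_length c n E f g P L \<longleftrightarrow>
     (\<exists>i<n. \<exists>t0 x T. shift_run c n E f g x t0 i \<and> P = orbit f g x t0 \<and> T > 0 \<and>
        pt f g (x (t0 + T)) (t0 + T) = pt f g i t0 \<and>
        (\<forall>s. 0 < s \<and> s < T \<longrightarrow> pt f g (x (t0 + s)) (t0 + s) \<noteq> pt f g i t0) \<and>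
        L = 2 * pi * T)"

definition robots_in ::
  "(nat \<Rightarrow> real) \<Rightarrow> (nat \<Rightarrow> real) \<Rightarrow> nat set \<Rightarrow> (nat \<Rightarrow> real \<Rightarrow> nat) \<Rightarrow>
   (nat \<times> real) set \<Rightarrow> real \<Rightarrow> nat set"
where
  "robots_in f g R pos P t = {r \<in> R. pt f g (pos r t) t \<in> P}"

definition robot_points ::
  "(nat \<Rightarrow> real) \<Rightarrow> (nat \<Rightarrow> real) \<Rightarrow> nat set \<Rightarrow> (nat \<Rightarrow> real \<Rightarrow> nat) \<Rightarrow> real \<Rightarrow> (nat \<times> real) set"
where
  "robot_points f g R pos t = {pt f g (pos r t) t | r. r \<in> R}"

end

theory Submission
  imports Defs
begin

(* Disjoint unit circles have centres more than 2 apart, whereas linked centres are at most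
   2 + eps < 2.5 apart. Hence at any time a circle sits at the link position of at most one
   neighbour, and by synchronization that neighbour sits at the reciprocal position. A robot that
   always shifts therefore follows a deterministic flow on the circles which is injective at every
   time and commutes with integer time shifts: a ring is an orbit of this flow, and a ring of
   length 2 l pi meets the schedule positions of any given time in exactly l circles.

   In a partial SCS a robot either follows the flow or, when blocked, stays on its circle, which
   is exactly where its blocker would have moved. Exchanging the two robots is a bijection showing
   that an event does not change the number of robots in a ring, and between events nothing
   changes. Robots occupy distinct circles, which gives the bound l. In a full SCS every robot is
   blocked at every link position, so no robot ever moves: every circle of the ring carries a
   robot, and the next robot along the ring is one time unit ahead. *)

lemma unit_spheres_meet:
  fixes p q :: complex
  assumes "dist p q \<le> 2"
  shows "sphere p 1 \<inter> sphere q 1 \<noteq> {}"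
proof (cases "p = q")
  case True
  then have "p + 1 \<in> sphere p 1 \<inter> sphere q 1" by (simp add: dist_norm)
  then show ?thesis by blast
next
  case False
  define w where "w = q - p"
  define d where "d = norm w"
  have d0: "d > 0" using False by (simp add: d_def w_def)
  have d2: "d \<le> 2" using assms by (simp add: d_def w_def dist_norm norm_minus_commute)
  define h where "h = sqrt (1 - d^2/4)"
  have hh: "h^2 = 1 - d^2/4" unfolding h_def using d2 d0
    by (subst real_sqrt_pow2) (auto simp: power2_eq_square intro!: mult_mono[of d 2 d 2, simplified])
  define u where "u = w / of_real d"
  have nu: "norm u = 1" using d0 by (simp add: u_def d_def norm_divide)
  define z where "z = p + u * Complex (d/2) h"
  have wu: "w = u * of_real d" using d0 by (simp add: u_def)
  have n1: "norm (Complex (d/2) h) = 1" using hh by (simp add: cmod_def power_divide)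
  have n2: "norm (Complex (- (d/2)) h) = 1" using hh by (simp add: cmod_def power_divide)
  have "z - p = u * Complex (d/2) h" by (simp add: z_def)
  then have "norm (z - p) = 1" by (simp add: norm_mult nu n1)
  then have a: "dist p z = 1" by (simp add: dist_norm norm_minus_commute)
  have e1: "z - q = u * Complex (d/2) h - u * of_real d"
    using wu by (simp add: z_def w_def) (metis minus_diff_eq)
  have e2: "Complex (d/2) h - of_real d = Complex (-d/2) h" by (simp add: complex_eq_iff)
  have "z - q = u * Complex (-d/2) h" unfolding e1 e2[symmetric] by (simp add: right_diff_distrib)
  then have "norm (z - q) = 1" by (simp add: norm_mult nu n2)
  then have b: "dist q z = 1" by (simp add: dist_norm norm_minus_commute)
  show ?thesis using a b by auto
qed

lemma norm_diff_same_Arg: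
  fixes a b :: complex
  assumes "a \<noteq> 0" "b \<noteq> 0" "Arg a = Arg b"
  shows "norm (a - b) = \<bar>norm a - norm b\<bar>"
proof -
  define e where "e = exp (\<i> * of_real (Arg a))"
  have "a = of_real (norm a) * e" using Arg_eq[OF assms(1)] by (simp add: e_def)
  moreover have "b = of_real (norm b) * e" using Arg_eq[OF assms(2)] assms(3) by (simp add: e_def)
  ultimately have "a - b = of_real (norm a - norm b) * e" by (metis left_diff_distrib of_real_diff)
  then show ?thesis by (simp add: norm_mult e_def flip: of_real_diff)
qed

lemma angeq_refl [simp]: "angeq a a"
  by (auto simp: angeq_def intro: exI[of _ 0])

lemma angeq_sym: "angeq a b \<Longrightarrow> angeq b a"
  unfolding angeq_def by (metis minus_diff_eq mult_minus_right of_int_minus)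

lemma angeq_trans: "angeq a b \<Longrightarrow> angeq b c \<Longrightarrow> angeq a c"
  unfolding angeq_def
proof (elim exE)
  fix k l :: int
  assume "a - b = 2 * pi * of_int k" "b - c = 2 * pi * of_int l"
  then have "a - c = 2 * pi * of_int (k + l)" by (simp add: algebra_simps)
  then show "\<exists>k::int. a - c = 2 * pi * of_int k" ..
qed

lemma angeq_Arg_imp_eq:
  assumes "angeq (Arg z) (Arg w)"
  shows "Arg z = Arg w"
proof -
  obtain k :: int where k: "Arg z - Arg w = 2 * pi * of_int k"
    using assms by (auto simp: angeq_def)
  have "\<bar>Arg z - Arg w\<bar> < 2 * pi * 1"
    using mpi_less_Arg[of z] Arg_le_pi[of z] mpi_less_Arg[of w] Arg_le_pi[of w] by linarith
  then have "\<bar>real_of_int k\<bar> < 1" unfolding k abs_mult by simp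
  then have "k = 0" by linarith
  then show ?thesis using k by simp
qed

lemma nang_eq_iff_angeq: "nang a = nang b \<longleftrightarrow> angeq a b"
proof
  assume "nang a = nang b"
  then have "a - b = 2 * pi * of_int (\<lfloor>a / (2 * pi)\<rfloor> - \<lfloor>b / (2 * pi)\<rfloor>)"
    by (simp add: nang_def algebra_simps)
  then show "angeq a b" unfolding angeq_def ..
next
  assume "angeq a b"
  then obtain k :: int where k: "a - b = 2 * pi * of_int k" by (auto simp: angeq_def)
  then have "a / (2 * pi) = b / (2 * pi) + of_int k" by (simp add: field_simps)
  then have "\<lfloor>a / (2 * pi)\<rfloor> = \<lfloor>b / (2 * pi)\<rfloor> + k" by simp
  then show "nang a = nang b" using k by (simp add: nang_def algebra_simps)
qed

lemma eventually_at_notin_Ints: "eventually (\<lambda>w. w \<notin> \<int>) (at (y::real))"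
proof -
  have "\<not> y islimpt \<int>"
    by (rule discrete_imp_not_islimpt[of 1]) (auto elim!: Ints_cases simp: dist_of_int)
  then show ?thesis by (simp add: islimpt_iff_eventually)
qed

lemma angeq_sched_isolated:
  assumes "g k \<noteq> 0"
  shows "eventually (\<lambda>w. \<not> angeq (sched f g k w) a) (at \<sigma>)"
proof -
  define h where "h w = (f k - a) / (2 * pi) + g k * w" for w
  have angeq_iff: "angeq (sched f g k w) a \<longleftrightarrow> h w \<in> \<int>" for w
  proof -
    have "sched f g k w - a = 2 * pi * h w" by (simp add: sched_def h_def field_simps)
    then show ?thesis unfolding angeq_def Ints_def by auto
  qed
  have "(h \<longlongrightarrow> h \<sigma>) (at \<sigma>)" unfolding h_def by (intro tendsto_intros)
  moreover have "eventually (\<lambda>w. h w \<noteq> h \<sigma>) (at \<sigma>)"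
    using assms by (auto simp: h_def eventually_at_filter)
  ultimately have "filterlim h (at (h \<sigma>)) (at \<sigma>)" by (simp add: filterlim_at)
  from eventually_compose_filterlim[OF eventually_at_notin_Ints this]
  show ?thesis by (simp add: angeq_iff)
qed

lemma left_const_iff_eventually:
  "left_const x t i \<longleftrightarrow> eventually (\<lambda>s. x s = i) (at_left t)"
  unfolding left_const_def eventually_at_left_field
proof
  assume "\<exists>\<delta>>0. \<forall>s. t - \<delta> < s \<and> s < t \<longrightarrow> x s = i"
  then obtain \<delta> where \<delta>: "\<delta> > 0" "\<forall>s. t - \<delta> < s \<and> s < t \<longrightarrow> x s = i" by blast
  show "\<exists>b<t. \<forall>y>b. y < t \<longrightarrow> x y = i"
  proof (intro exI[of _ "t - \<delta>"] conjI allI impI)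
    fix y assume "t - \<delta> < y" "y < t"
    then show "x y = i" using \<delta>(2) by blast
  qed (use \<delta> in simp)
next
  assume "\<exists>b<t. \<forall>y>b. y < t \<longrightarrow> x y = i"
  then obtain b where "b < t" "\<forall>y>b. y < t \<longrightarrow> x y = i" by blast
  then show "\<exists>\<delta>>0. \<forall>s. t - \<delta> < s \<and> s < t \<longrightarrow> x s = i" by (intro exI[of _ "t - b"]) auto
qed

lemma right_const_iff_eventually:
  "right_const x t \<longleftrightarrow> eventually (\<lambda>s. x s = x t) (at_right t)"
  unfolding right_const_def eventually_at_right_field
proof
  assume "\<exists>\<delta>>0. \<forall>s. t \<le> s \<and> s < t + \<delta> \<longrightarrow> x s = x t"
  then obtain \<delta> where \<delta>: "\<delta> > 0" "\<forall>s. t \<le> s \<and> s < t + \<delta> \<longrightarrow> x s = x t" by blast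
  show "\<exists>b>t. \<forall>y>t. y < b \<longrightarrow> x y = x t"
  proof (intro exI[of _ "t + \<delta>"] conjI allI impI)
    fix y assume "t < y" "y < t + \<delta>"
    then show "x y = x t" using \<delta>(2) less_imp_le by blast
  qed (use \<delta> in simp)
next
  assume "\<exists>b>t. \<forall>y>t. y < b \<longrightarrow> x y = x t"
  then obtain b where b: "b > t" "\<forall>y>t. y < b \<longrightarrow> x y = x t" by blast
  show "\<exists>\<delta>>0. \<forall>s. t \<le> s \<and> s < t + \<delta> \<longrightarrow> x s = x t"
  proof (intro exI[of _ "b - t"] conjI allI impI)
    fix s assume "t \<le> s \<and> s < t + (b - t)"
    then have "s = t \<or> (t < s \<and> s < b)" by auto
    then show "x s = x t" using b(2) by blast
  qed (use b in simp)
qed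

lemma left_const_shift: "left_const (\<lambda>s. x (s + d)) t i \<longleftrightarrow> left_const x (t + d) i"
  unfolding left_const_def
proof (intro iffI; elim exE conjE)
  fix \<delta> :: real assume "\<delta> > 0" and H: "\<forall>s. t - \<delta> < s \<and> s < t \<longrightarrow> x (s + d) = i"
  show "\<exists>\<delta>>0. \<forall>s. t + d - \<delta> < s \<and> s < t + d \<longrightarrow> x s = i"
  proof (intro exI[of _ \<delta>] conjI allI impI)
    fix s assume "t + d - \<delta> < s \<and> s < t + d"
    then show "x s = i" using H[rule_format, of "s - d"] by simp
  qed (fact \<open>\<delta> > 0\<close>)
next
  fix \<delta> :: real assume "\<delta> > 0" and H: "\<forall>s. t + d - \<delta> < s \<and> s < t + d \<longrightarrow> x s = i"
  show "\<exists>\<delta>>0. \<forall>s. t - \<delta> < s \<and> s < t \<longrightarrow> x (s + d) = i"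
  proof (intro exI[of _ \<delta>] conjI allI impI)
    fix s assume "t - \<delta> < s \<and> s < t"
    then show "x (s + d) = i" using H[rule_format, of "s + d"] by simp
  qed (fact \<open>\<delta> > 0\<close>)
qed

lemma right_const_shift: "right_const (\<lambda>s. x (s + d)) t \<longleftrightarrow> right_const x (t + d)"
  unfolding right_const_def
proof (intro iffI; elim exE conjE)
  fix \<delta> :: real assume "\<delta> > 0" and H: "\<forall>s. t \<le> s \<and> s < t + \<delta> \<longrightarrow> x (s + d) = x (t + d)"
  show "\<exists>\<delta>>0. \<forall>s. t + d \<le> s \<and> s < t + d + \<delta> \<longrightarrow> x s = x (t + d)"
  proof (intro exI[of _ \<delta>] conjI allI impI)
    fix s assume "t + d \<le> s \<and> s < t + d + \<delta>"
    then show "x s = x (t + d)" using H[rule_format, of "s - d"] by simp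
  qed (fact \<open>\<delta> > 0\<close>)
next
  fix \<delta> :: real assume "\<delta> > 0" and H: "\<forall>s. t + d \<le> s \<and> s < t + d + \<delta> \<longrightarrow> x s = x (t + d)"
  show "\<exists>\<delta>>0. \<forall>s. t \<le> s \<and> s < t + \<delta> \<longrightarrow> x (s + d) = x (t + d)"
  proof (intro exI[of _ \<delta>] conjI allI impI)
    fix s assume "t \<le> s \<and> s < t + \<delta>"
    then show "x (s + d) = x (t + d)" using H[rule_format, of "s + d"] by simp
  qed (fact \<open>\<delta> > 0\<close>)
qed
lemma left_const_unique: "left_const x t i \<Longrightarrow> left_const x t j \<Longrightarrow> i = j"
proof -
  assume "left_const x t i" "left_const x t j"
  then have "eventually (\<lambda>s. i = j) (at_left t)"
    unfolding left_const_iff_eventually by eventually_elim simp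
  then show "i = j" by (simp add: eventually_const_iff)
qed

lemma eventually_at_left_obtain:
  assumes "eventually P (at_left (t::real))" "b < t"
  obtains s where "b < s" "s < t" "P s"
proof -
  have "eventually (\<lambda>s. b < s \<and> s < t \<and> P s) (at_left t)"
    using eventually_at_left_real[OF assms(2)] assms(1) by eventually_elim auto
  then show ?thesis using that eventually_happens trivial_limit_at_left_real by blast
qed

lemma real_induct [consumes 1, case_names left right]:
  fixes a t :: real
  assumes "a \<le> t"
    and left: "\<And>\<sigma>. a \<le> \<sigma> \<Longrightarrow> (\<And>s. a \<le> s \<Longrightarrow> s < \<sigma> \<Longrightarrow> Q s) \<Longrightarrow> Q \<sigma>"
    and right: "\<And>\<sigma>. a \<le> \<sigma> \<Longrightarrow> Q \<sigma> \<Longrightarrow> eventually Q (at_right \<sigma>)"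
  shows "Q t"
proof (rule ccontr)
  define S where "S = {s. a \<le> s \<and> \<not> Q s}"
  assume "\<not> Q t"
  then have ne: "S \<noteq> {}" using \<open>a \<le> t\<close> by (auto simp: S_def)
  have bdd: "bdd_below S" by (auto simp: S_def bdd_below_def)
  define \<sigma> where "\<sigma> = Inf S"
  have a\<sigma>: "a \<le> \<sigma>" unfolding \<sigma>_def by (rule cInf_greatest[OF ne]) (auto simp: S_def)
  have below: "Q s" if "a \<le> s" "s < \<sigma>" for s
    using cInf_lower[OF _ bdd, of s] that by (force simp: S_def \<sigma>_def)
  have Q\<sigma>: "Q \<sigma>" by (rule left[OF a\<sigma> below])
  obtain b where "b > \<sigma>" "\<And>s. \<sigma> < s \<Longrightarrow> s < b \<Longrightarrow> Q s"
    using right[OF a\<sigma> Q\<sigma>] unfolding eventually_at_right_field by blast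
  then have "b \<le> s" if "s \<in> S" for s
    using that cInf_lower[OF that bdd] Q\<sigma> by (force simp: S_def \<sigma>_def not_less[symmetric])
  then have "b \<le> \<sigma>" unfolding \<sigma>_def by (rule cInf_greatest[OF ne])
  then show False using \<open>b > \<sigma>\<close> by simp
qed

lemma card_preimage_involution:
  assumes "\<And>r. r \<in> R \<Longrightarrow> h r \<in> R" "\<And>r. r \<in> R \<Longrightarrow> h (h r) = r" "A \<subseteq> R"
  shows "card {r \<in> R. h r \<in> A} = card A"
proof -
  have "{r \<in> R. h r \<in> A} = h ` A" using assms by (auto simp: image_iff) (metis subsetD)
  moreover have "inj_on h A" using assms by (metis inj_onI subsetD)
  ultimately show ?thesis by (simp add: card_image)
qed

locale scs =
  fixes c :: "nat \<Rightarrow> complex" and n :: nat and eps :: real and E :: "(nat \<times> nat) set"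
    and f g :: "nat \<Rightarrow> real"
  assumes setting: "SCS_setting c n eps E f g"
begin

lemma link_potential: "(i, j) \<in> E \<Longrightarrow> i < n \<and> j < n \<and> i \<noteq> j \<and> dist (c i) (c j) \<le> 2 + eps"
  using setting by (auto simp: SCS_setting_def potential_links_def)

lemma link_sym: "(i, j) \<in> E \<Longrightarrow> (j, i) \<in> E"
  using setting by (auto simp: SCS_setting_def dest: symD)

lemma link_sync:
  "(i, j) \<in> E \<Longrightarrow> angeq (sched f g i t) (linkpos c i j) \<longleftrightarrow> angeq (sched f g j t) (linkpos c j i)"
  using setting unfolding SCS_setting_def by blast

lemma finite_links: "finite E"
proof -
  have "E \<subseteq> {..<n} \<times> {..<n}" using link_potential by auto
  then show ?thesis by (rule finite_subset) simp
qed

lemma direction_cases: "i < n \<Longrightarrow> g i = 1 \<or> g i = -1"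
  using setting by (auto simp: SCS_setting_def)

lemma centres_far: "i < n \<Longrightarrow> j < n \<Longrightarrow> i \<noteq> j \<Longrightarrow> 2 < dist (c i) (c j)"
proof (rule ccontr)
  assume "i < n" "j < n" "i \<noteq> j" "\<not> 2 < dist (c i) (c j)"
  then have "sphere (c i) 1 \<inter> sphere (c j) 1 \<noteq> {}" by (intro unit_spheres_meet) auto
  then show False using setting \<open>i < n\<close> \<open>j < n\<close> \<open>i \<noteq> j\<close> by (auto simp: SCS_setting_def)
qed

text \<open>Two neighbours of \<open>C\<^sub>i\<close> in the same direction from its centre would have centres
  less than \<open>eps\<close> apart.\<close>
lemma link_unique:
  assumes "(i, j) \<in> E" "(i, k) \<in> E" "angeq a (linkpos c i j)" "angeq a (linkpos c i k)"
  shows "j = k"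
proof (rule ccontr)
  assume "j \<noteq> k"
  have "angeq (linkpos c i j) (linkpos c i k)" using assms(3,4) angeq_sym angeq_trans by blast
  then have Arg: "Arg (c j - c i) = Arg (c k - c i)" unfolding linkpos_def by (rule angeq_Arg_imp_eq)
  have ij: "i < n" "j < n" "i \<noteq> j" "dist (c i) (c j) \<le> 2 + eps" using link_potential[OF assms(1)] by auto
  have ik: "k < n" "i \<noteq> k" "dist (c i) (c k) \<le> 2 + eps" using link_potential[OF assms(2)] by auto
  have dj: "2 < norm (c j - c i)" "norm (c j - c i) \<le> 2 + eps"
    using centres_far[of i j] ij by (auto simp: dist_norm norm_minus_commute)
  have dk: "2 < norm (c k - c i)" "norm (c k - c i) \<le> 2 + eps"
    using centres_far[of i k] ij ik by (auto simp: dist_norm norm_minus_commute)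
  have "norm ((c j - c i) - (c k - c i)) = \<bar>norm (c j - c i) - norm (c k - c i)\<bar>"
    by (rule norm_diff_same_Arg) (use dj dk Arg in auto)
  moreover have "eps < 1/2" using setting by (simp add: SCS_setting_def)
  ultimately have "dist (c j) (c k) < 2" using dj dk by (simp add: dist_norm)
  then show False using centres_far[of j k] ij ik \<open>j \<noteq> k\<close> by auto
qed

definition active :: "nat \<Rightarrow> real \<Rightarrow> bool" where
  "active i s \<longleftrightarrow> (\<exists>j. (i, j) \<in> E \<and> angeq (sched f g i s) (linkpos c i j))"

definition hop :: "nat \<Rightarrow> real \<Rightarrow> nat" where
  "hop i s = (if active i s then (SOME j. (i, j) \<in> E \<and> angeq (sched f g i s) (linkpos c i j)) else i)"

lemma active_hop: "active i s \<Longrightarrow> (i, hop i s) \<in> E \<and> angeq (sched f g i s) (linkpos c i (hop i s))"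
proof -
  assume "active i s"
  then have "\<exists>j. (i, j) \<in> E \<and> angeq (sched f g i s) (linkpos c i j)" by (simp add: active_def)
  then have "(i, SOME j. (i, j) \<in> E \<and> angeq (sched f g i s) (linkpos c i j)) \<in> E \<and>
      angeq (sched f g i s) (linkpos c i (SOME j. (i, j) \<in> E \<and> angeq (sched f g i s) (linkpos c i j)))"
    by (rule someI_ex)
  then show ?thesis using \<open>active i s\<close> by (simp add: hop_def)
qed

lemma hop_eqI: "(i, j) \<in> E \<Longrightarrow> angeq (sched f g i s) (linkpos c i j) \<Longrightarrow> hop i s = j"
  using active_hop link_unique unfolding active_def by blast

lemma hop_inactive: "\<not> active i s \<Longrightarrow> hop i s = i"
  by (simp add: hop_def)

lemma hop_less: "i < n \<Longrightarrow> hop i s < n"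
  by (cases "active i s") (auto dest: active_hop link_potential simp: hop_inactive)

lemma hop_hop [simp]: "hop (hop i s) s = i"
proof (cases "active i s")
  case True
  then have "(hop i s, i) \<in> E" "angeq (sched f g (hop i s) s) (linkpos c (hop i s) i)"
    using active_hop link_sym link_sync by auto
  then show ?thesis by (rule hop_eqI)
qed (simp add: hop_inactive)

lemma hop_inj [simp]: "hop i s = hop j s \<longleftrightarrow> i = j"
  by (metis hop_hop)

lemma angeq_sched_int_shift:
  assumes "i < n"
  shows "angeq (sched f g i (s + of_int d)) a \<longleftrightarrow> angeq (sched f g i s) a"
proof -
  have "angeq (sched f g i (s + of_int d)) (sched f g i s)"
    unfolding angeq_def sched_def using direction_cases[OF assms]
    by (auto intro: exI[of _ d] exI[of _ "-d"] simp: algebra_simps)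
  then show ?thesis using angeq_sym angeq_trans by blast
qed

lemma active_int_shift: "active i (s + of_int d) \<longleftrightarrow> active i s"
  unfolding active_def using angeq_sched_int_shift link_potential by blast

lemma hop_int_shift: "hop i (s + of_int d) = hop i s"
proof (cases "active i s")
  case True
  then have "(i, hop i s) \<in> E" "angeq (sched f g i (s + of_int d)) (linkpos c i (hop i s))"
    using active_hop angeq_sched_int_shift link_potential by blast+
  then show ?thesis by (rule hop_eqI)
qed (simp add: active_int_shift hop_inactive)

lemma pt_int_shift: "k < n \<Longrightarrow> pt f g k (s + of_int d) = pt f g k s"
  unfolding pt_def using angeq_sched_int_shift[of k s d] by (simp add: nang_eq_iff_angeq)

lemma pt_eqD:
  assumes "pt f g k s = pt f g k' s'" "k < n"
  shows "k' = k \<and> (\<exists>d::int. s' = s + of_int d)"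
proof -
  have k': "k' = k" using assms by (simp add: pt_def)
  then have "angeq (sched f g k s) (sched f g k s')" using assms by (simp add: pt_def nang_eq_iff_angeq)
  then obtain m :: int where "sched f g k s - sched f g k s' = 2 * pi * of_int m"
    by (auto simp: angeq_def)
  then have "2 * pi * (g k * (s - s')) = 2 * pi * of_int m" by (simp add: sched_def algebra_simps)
  then have "g k * (s - s') = of_int m" by simp
  then have "s' = s + of_int (-m) \<or> s' = s + of_int m" using direction_cases[OF assms(2)] by auto
  then show ?thesis using k' by blast
qed

lemma eventually_inactive: "eventually (\<lambda>w. \<forall>k. \<not> active k w) (at \<sigma>)"
proof -
  have "\<forall>p\<in>E. eventually (\<lambda>w. \<not> angeq (sched f g (fst p) w) (linkpos c (fst p) (snd p))) (at \<sigma>)"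
  proof
    fix p assume "p \<in> E"
    then have "g (fst p) \<noteq> 0" using link_potential[of "fst p" "snd p"] direction_cases[of "fst p"] by force
    then show "eventually (\<lambda>w. \<not> angeq (sched f g (fst p) w) (linkpos c (fst p) (snd p))) (at \<sigma>)"
      by (rule angeq_sched_isolated)
  qed
  then have "eventually (\<lambda>w. \<forall>p\<in>E. \<not> angeq (sched f g (fst p) w) (linkpos c (fst p) (snd p))) (at \<sigma>)"
    by (rule eventually_ball_finite[OF finite_links])
  then show ?thesis
    unfolding active_def by eventually_elim (metis fst_conv snd_conv)
qed

lemma shift_run_iff:
  "shift_run c n E f g x t0 i0 \<longleftrightarrow>
     x t0 = i0 \<and> (\<forall>t\<ge>t0. x t < n \<and> right_const x t) \<and> (\<forall>t>t0. \<exists>i. left_const x t i) \<and>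
     (\<forall>t>t0. \<forall>i. left_const x t i \<longrightarrow> x t = hop i t)"
proof -
  have "((\<exists>j. (i, j) \<in> E \<and> angeq (sched f g i t) (linkpos c i j)) \<longrightarrow>
            (i, x t) \<in> E \<and> angeq (sched f g i t) (linkpos c i (x t))) \<and>
        ((\<not> (\<exists>j. (i, j) \<in> E \<and> angeq (sched f g i t) (linkpos c i j))) \<longrightarrow> x t = i)
        \<longleftrightarrow> x t = hop i t" for i t
    using active_hop hop_eqI hop_inactive unfolding active_def[symmetric] by metis
  then show ?thesis unfolding shift_run_def by simp
qed

lemma shift_run_start: "shift_run c n E f g x t0 i0 \<Longrightarrow> x t0 = i0"
  by (simp add: shift_run_iff)

lemma shift_run_less: "shift_run c n E f g x t0 i0 \<Longrightarrow> t0 \<le> t \<Longrightarrow> x t < n"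
  by (simp add: shift_run_iff)

lemma shift_run_right_const: "shift_run c n E f g x t0 i0 \<Longrightarrow> t0 \<le> t \<Longrightarrow> right_const x t"
  by (simp add: shift_run_iff)

lemma shift_run_left_const: "shift_run c n E f g x t0 i0 \<Longrightarrow> t0 < t \<Longrightarrow> \<exists>i. left_const x t i"
  by (simp add: shift_run_iff)

lemma shift_run_step: "shift_run c n E f g x t0 i0 \<Longrightarrow> t0 < t \<Longrightarrow> left_const x t i \<Longrightarrow> x t = hop i t"
  by (simp add: shift_run_iff)

lemma shift_run_int_shift:
  assumes x: "shift_run c n E f g x t0 i0"
  shows "shift_run c n E f g (\<lambda>s. x (s + of_int d)) (t0 - of_int d) i0"
  unfolding shift_run_iff left_const_shift right_const_shift
proof (intro conjI allI impI)
  show "x (t0 - of_int d + of_int d) = i0" using shift_run_start[OF x] by simp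
next
  fix t assume "t0 - of_int d \<le> t"
  then show "x (t + of_int d) < n" "right_const x (t + of_int d)"
    using shift_run_less[OF x] shift_run_right_const[OF x] by auto
next
  fix t assume "t0 - of_int d < t"
  then show "\<exists>i. left_const x (t + of_int d) i" using shift_run_left_const[OF x] by auto
next
  fix t i assume "t0 - of_int d < t" "left_const x (t + of_int d) i"
  then show "x (t + of_int d) = hop i t" using shift_run_step[OF x] hop_int_shift by auto
qed

lemma shift_run_const:
  assumes x: "shift_run c n E f g x t0 i0" and "t0 \<le> a"
    and inactive: "\<And>k w. a < w \<Longrightarrow> w < b \<Longrightarrow> \<not> active k w"
    and "a \<le> s" "s < b"
  shows "x s = x a"
proof -
  have "s < b \<longrightarrow> x s = x a" using \<open>a \<le> s\<close>
  proof (induction s rule: real_induct)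
    case (left \<sigma>)
    show ?case
    proof (intro impI, cases "\<sigma> = a")
      assume "\<sigma> < b" "\<sigma> \<noteq> a"
      then have "a < \<sigma>" using left(1) by simp
      have "left_const x \<sigma> (x a)" unfolding left_const_def
      proof (intro exI[of _ "\<sigma> - a"] conjI allI impI)
        fix s assume "\<sigma> - (\<sigma> - a) < s \<and> s < \<sigma>"
        then show "x s = x a" using left(2)[of s] \<open>\<sigma> < b\<close> by simp
      qed (use \<open>a < \<sigma>\<close> in simp)
      then have "x \<sigma> = hop (x a) \<sigma>" using shift_run_step[OF x] \<open>a < \<sigma>\<close> \<open>t0 \<le> a\<close> by simp
      then show "x \<sigma> = x a" using inactive[OF \<open>a < \<sigma>\<close> \<open>\<sigma> < b\<close>] by (simp add: hop_inactive)
    qed simp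
  next
    case (right \<sigma>)
    have "eventually (\<lambda>s. x s = x \<sigma>) (at_right \<sigma>)"
      using shift_run_right_const[OF x] right(1) \<open>t0 \<le> a\<close> by (simp add: right_const_iff_eventually)
    moreover have "eventually (\<lambda>s. \<sigma> < s) (at_right \<sigma>)" by (simp add: eventually_at_right_less)
    ultimately show ?case by eventually_elim (use right(2) in auto)
  qed
  then show ?thesis using \<open>s < b\<close> by blast
qed

lemma shift_run_hop:
  assumes x: "shift_run c n E f g x t0 i0" and "t0 \<le> a" "a < b"
    and inactive: "\<And>k w. a < w \<Longrightarrow> w < b \<Longrightarrow> \<not> active k w"
  shows "x b = hop (x a) b"
proof -
  have "left_const x b (x a)" unfolding left_const_def
  proof (intro exI[of _ "b - a"] conjI allI impI)
    fix s assume "b - (b - a) < s \<and> s < b"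
    then show "x s = x a" by (intro shift_run_const[OF x \<open>t0 \<le> a\<close> inactive]) auto
  qed (use \<open>a < b\<close> in simp)
  then show ?thesis using shift_run_step[OF x] \<open>t0 \<le> a\<close> \<open>a < b\<close> by simp
qed

lemma shift_run_const_closed:
  assumes x: "shift_run c n E f g x t0 i0" and "t0 \<le> a" "a \<le> b"
    and inactive: "\<And>k w. a < w \<Longrightarrow> w \<le> b \<Longrightarrow> \<not> active k w"
  shows "x b = x a"
proof (cases "a = b")
  case False
  then have "x b = hop (x a) b" by (intro shift_run_hop[OF x \<open>t0 \<le> a\<close>]) (use assms in auto)
  then show ?thesis using inactive[of b "x a"] False assms by (simp add: hop_inactive)
qed simp

text \<open>Both runs apply the same injective \<open>hop\<close> at every event.\<close>
lemma shift_run_eq_preserved: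
  assumes x: "shift_run c n E f g x t0 i0" and y: "shift_run c n E f g y t1 j0"
    and "t0 \<le> a" "t1 \<le> a" "a \<le> s"
  shows "x s = y s \<longleftrightarrow> x a = y a"
  using \<open>a \<le> s\<close>
proof (induction s rule: real_induct)
  case (left \<sigma>)
  show ?case
  proof (cases "\<sigma> = a")
    case False
    then have "a < \<sigma>" using left(1) by simp
    obtain ix iy where ix: "left_const x \<sigma> ix" and iy: "left_const y \<sigma> iy"
      using shift_run_left_const[OF x] shift_run_left_const[OF y] \<open>a < \<sigma>\<close> assms by force
    have "eventually (\<lambda>s. x s = ix \<and> y s = iy) (at_left \<sigma>)"
      using ix iy unfolding left_const_iff_eventually by (rule eventually_conj)
    then obtain s where "a < s" "s < \<sigma>" "x s = ix \<and> y s = iy"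
      using \<open>a < \<sigma>\<close> by (rule eventually_at_left_obtain)
    then have "ix = iy \<longleftrightarrow> x a = y a" using left(2)[of s] by simp
    moreover have "x \<sigma> = hop ix \<sigma>" "y \<sigma> = hop iy \<sigma>"
      using shift_run_step[OF x] shift_run_step[OF y] ix iy \<open>a < \<sigma>\<close> assms by auto
    ultimately show ?thesis by simp
  qed simp
next
  case (right \<sigma>)
  have "eventually (\<lambda>s. x s = x \<sigma>) (at_right \<sigma>)" "eventually (\<lambda>s. y s = y \<sigma>) (at_right \<sigma>)"
    using shift_run_right_const[OF x] shift_run_right_const[OF y] right(1) assms
    by (simp_all add: right_const_iff_eventually)
  then show ?case by eventually_elim (use right(2) in simp)
qed

lemma shift_run_period_from:
  assumes x: "shift_run c n E f g x t0 i0" and "t0 \<le> a" "x (a + real d) = x a" "a \<le> s"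
  shows "x (s + real d) = x s"
proof -
  have "shift_run c n E f g (\<lambda>s. x (s + of_int (int d))) (t0 - of_int (int d)) i0"
    by (rule shift_run_int_shift[OF x])
  from shift_run_eq_preserved[OF this x, of a s] assms show ?thesis by simp
qed

lemma shift_run_periodic:
  assumes x: "shift_run c n E f g x t0 i0"
  obtains d :: nat where "d > 0" "\<forall>s\<ge>t0. x (s + real d) = x s"
proof -
  have "(\<lambda>m. x (t0 + real m)) ` {..n} \<subseteq> {..<n}" using shift_run_less[OF x] by auto
  then have "\<not> inj_on (\<lambda>m. x (t0 + real m)) {..n}"
    using card_inj_on_le[of _ "{..n}" "{..<n}"] by fastforce
  then obtain p q where "p < q" "x (t0 + real p) = x (t0 + real q)"
    unfolding inj_on_def by (metis linorder_neqE_nat)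
  define d where "d = q - p"
  have y: "shift_run c n E f g (\<lambda>s. x (s + of_int (int d))) (t0 - of_int (int d)) i0"
    by (rule shift_run_int_shift[OF x])
  have "x (t0 + real p + real d) = x (t0 + real p)"
    using \<open>p < q\<close> \<open>x (t0 + real p) = x (t0 + real q)\<close> by (simp add: d_def)
  then have "x (t0 + real d) = x t0"
    using shift_run_eq_preserved[OF y x, of t0 "t0 + real p"] by simp
  then have "\<forall>s\<ge>t0. x (s + real d) = x s" using shift_run_period_from[OF x order_refl] by blast
  then show ?thesis using that[of d] \<open>p < q\<close> by (simp add: d_def)
qed

lemma shift_run_period_mult:
  assumes x: "shift_run c n E f g x t0 i0" and per: "\<forall>s\<ge>t0. x (s + real d) = x s" and "t0 \<le> s"
  shows "x (s + real (m * d)) = x s"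
proof (induction m)
  case (Suc m)
  have "x (s + real (Suc m * d)) = x ((s + real (m * d)) + real d)" by (simp add: algebra_simps)
  also have "\<dots> = x (s + real (m * d))" using per \<open>t0 \<le> s\<close> by (simp add: add_increasing2)
  finally show ?case using Suc by simp
qed simp

lemma pt_in_orbitI:
  assumes x: "shift_run c n E f g x t0 i0" and "t0 \<le> u + of_int d"
  shows "pt f g (x (u + of_int d)) u \<in> orbit f g x t0"
proof -
  have "pt f g (x (u + of_int d)) (u + of_int d) = pt f g (x (u + of_int d)) u"
    using pt_int_shift shift_run_less[OF x assms(2)] by blast
  then show ?thesis
    using assms(2) unfolding orbit_def by (metis (mono_tags, lifting) mem_Collect_eq)
qed

lemma pt_in_orbit_late:
  assumes x: "shift_run c n E f g x t0 i0" and "pt f g k u \<in> orbit f g x t0"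
  obtains d :: int where "M \<le> u + of_int d" "x (u + of_int d) = k"
proof -
  obtain s where s: "t0 \<le> s" "pt f g (x s) s = pt f g k u" using assms(2) by (auto simp: orbit_def)
  obtain e :: int where e: "k = x s" "u = s + of_int e"
    using pt_eqD[OF s(2) shift_run_less[OF x s(1)]] by blast
  obtain p :: nat where "p > 0" and per: "\<forall>s\<ge>t0. x (s + real p) = x s"
    by (rule shift_run_periodic[OF x])
  obtain m :: nat where m: "M - s < real m" using reals_Archimedean2 by blast
  have "m \<le> m * p" using \<open>p > 0\<close> by simp
  then have "real m \<le> real (m * p)" by (simp only: of_nat_le_iff)
  then have "M \<le> u + of_int (int (m * p) - e)" using m e(2) by simp
  moreover have "x (u + of_int (int (m * p) - e)) = k"
    using shift_run_period_mult[OF x per s(1), of m] e by simp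
  ultimately show ?thesis by (rule that)
qed

lemma orbit_transport:
  assumes x: "shift_run c n E f g x t0 i0" and "u \<le> v" "inj \<phi>"
    and step: "\<And>d::int. t0 \<le> u + of_int d \<Longrightarrow> x (v + of_int d) = \<phi> (x (u + of_int d))"
  shows "pt f g k u \<in> orbit f g x t0 \<longleftrightarrow> pt f g (\<phi> k) v \<in> orbit f g x t0"
proof
  assume "pt f g k u \<in> orbit f g x t0"
  then obtain d :: int where d: "t0 \<le> u + of_int d" "x (u + of_int d) = k"
    by (rule pt_in_orbit_late[OF x])
  moreover have "t0 \<le> v + of_int d" using d(1) \<open>u \<le> v\<close> by simp
  ultimately show "pt f g (\<phi> k) v \<in> orbit f g x t0" using pt_in_orbitI[OF x, of v d] step by metis
next
  assume "pt f g (\<phi> k) v \<in> orbit f g x t0"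
  then obtain d :: int where d: "t0 + (v - u) \<le> v + of_int d" "x (v + of_int d) = \<phi> k"
    by (rule pt_in_orbit_late[OF x])
  then have "t0 \<le> u + of_int d" by simp
  moreover have "x (u + of_int d) = k" using step[OF calculation] d(2) \<open>inj \<phi>\<close> by (simp add: inj_eq)
  ultimately show "pt f g k u \<in> orbit f g x t0" using pt_in_orbitI[OF x, of u d] by simp
qed

lemma orbit_flow:
  assumes x: "shift_run c n E f g x t0 i0" and "u \<le> v"
    and inactive: "\<And>k w. u < w \<Longrightarrow> w \<le> v \<Longrightarrow> \<not> active k w"
  shows "pt f g k u \<in> orbit f g x t0 \<longleftrightarrow> pt f g k v \<in> orbit f g x t0"
proof -
  have "x (v + of_int d) = x (u + of_int d)" if "t0 \<le> u + of_int d" for d :: int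
  proof (rule shift_run_const_closed[OF x that])
    show "u + of_int d \<le> v + of_int d" using \<open>u \<le> v\<close> by simp
    fix k w assume "u + of_int d < w" "w \<le> v + of_int d"
    then show "\<not> active k w" using inactive[of "w - of_int d" k] active_int_shift[of k "w - of_int d" d] by simp
  qed
  then show ?thesis using orbit_transport[OF x \<open>u \<le> v\<close>, of id k] by simp
qed

lemma orbit_hop:
  assumes x: "shift_run c n E f g x t0 i0" and "u < v"
    and inactive: "\<And>k w. u < w \<Longrightarrow> w < v \<Longrightarrow> \<not> active k w"
  shows "pt f g k u \<in> orbit f g x t0 \<longleftrightarrow> pt f g (hop k v) v \<in> orbit f g x t0"
proof -
  have "x (v + of_int d) = hop (x (u + of_int d)) v" if "t0 \<le> u + of_int d" for d :: int
  proof -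
    have "x (v + of_int d) = hop (x (u + of_int d)) (v + of_int d)"
    proof (rule shift_run_hop[OF x that])
      show "u + of_int d < v + of_int d" using \<open>u < v\<close> by simp
      fix k w assume "u + of_int d < w" "w < v + of_int d"
      then show "\<not> active k w" using inactive[of "w - of_int d" k] active_int_shift[of k "w - of_int d" d] by simp
    qed
    then show ?thesis by (simp add: hop_int_shift)
  qed
  moreover have "inj (\<lambda>k. hop k v)" by (simp add: inj_def)
  ultimately show ?thesis using orbit_transport[OF x less_imp_le[OF \<open>u < v\<close>], of "\<lambda>k. hop k v" k] by simp
qed

definition ring_circles :: "(real \<Rightarrow> nat) \<Rightarrow> real \<Rightarrow> real \<Rightarrow> nat set" where
  "ring_circles x t0 t = {k. pt f g k t \<in> orbit f g x t0}"

lemma ring_circles_eq: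
  assumes x: "shift_run c n E f g x t0 i0" and per: "\<forall>s\<ge>t0. x (s + real l) = x s" and "l > 0"
  shows "ring_circles x t0 t = (\<lambda>m. x (t + of_int \<lceil>t0 - t\<rceil> + real m)) ` {..<l}"
proof
  define s0 where "s0 = t + of_int \<lceil>t0 - t\<rceil>"
  have "t0 \<le> s0" unfolding s0_def using ceiling_correct[of "t0 - t"] by linarith
  show "ring_circles x t0 t \<subseteq> (\<lambda>m. x (t + of_int \<lceil>t0 - t\<rceil> + real m)) ` {..<l}"
  proof
    fix k assume "k \<in> ring_circles x t0 t"
    then obtain d :: int where d: "t0 \<le> t + of_int d" "x (t + of_int d) = k"
      unfolding ring_circles_def using pt_in_orbit_late[OF x] by blast
    define e where "e = nat (d - \<lceil>t0 - t\<rceil>)"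
    have "\<lceil>t0 - t\<rceil> \<le> d" using d(1) by (simp add: ceiling_le_iff)
    then have "t + of_int d = s0 + real e" by (simp add: s0_def e_def)
    also have "real e = real (e mod l) + real (e div l * l)"
      unfolding of_nat_add[symmetric] by simp
    finally have "t + of_int d = (s0 + real (e mod l)) + real (e div l * l)" by simp
    moreover have "x (s0 + real (e mod l) + real (e div l * l)) = x (s0 + real (e mod l))"
      by (rule shift_run_period_mult[OF x per]) (use \<open>t0 \<le> s0\<close> in simp)
    ultimately have "k = x (s0 + real (e mod l))" using d(2) by simp
    moreover have "e mod l < l" using \<open>l > 0\<close> by simp
    ultimately show "k \<in> (\<lambda>m. x (t + of_int \<lceil>t0 - t\<rceil> + real m)) ` {..<l}" unfolding s0_def by blast
  qed
  show "(\<lambda>m. x (t + of_int \<lceil>t0 - t\<rceil> + real m)) ` {..<l} \<subseteq> ring_circles x t0 t"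
  proof
    fix k assume "k \<in> (\<lambda>m. x (t + of_int \<lceil>t0 - t\<rceil> + real m)) ` {..<l}"
    then obtain m where "k = x (t + of_int \<lceil>t0 - t\<rceil> + real m)" by blast
    moreover have "t + of_int \<lceil>t0 - t\<rceil> + real m = t + of_int (\<lceil>t0 - t\<rceil> + int m)" by simp
    moreover have "t0 \<le> t + of_int (\<lceil>t0 - t\<rceil> + int m)" using \<open>t0 \<le> s0\<close> by (simp add: s0_def)
    then have "pt f g (x (t + of_int (\<lceil>t0 - t\<rceil> + int m))) t \<in> orbit f g x t0"
      by (rule pt_in_orbitI[OF x])
    ultimately show "k \<in> ring_circles x t0 t" unfolding ring_circles_def by simp
  qed
qed

lemma ring_circles_less:
  assumes x: "shift_run c n E f g x t0 i0" and "k \<in> ring_circles x t0 t"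
  shows "k < n"
proof -
  have "pt f g k t \<in> orbit f g x t0" using assms(2) by (simp add: ring_circles_def)
  then obtain d :: int where "t0 \<le> t + of_int d" "x (t + of_int d) = k"
    by (rule pt_in_orbit_late[OF x])
  then show ?thesis using shift_run_less[OF x] by blast
qed

text \<open>A repetition would be a shorter period and bring the run back to its start before time \<open>l\<close>.\<close>
lemma shift_run_inj_before_return:
  assumes x: "shift_run c n E f g x t0 i0" and per: "\<forall>s\<ge>t0. x (s + real l) = x s"
    and minimal: "\<forall>s. 0 < s \<and> s < real l \<longrightarrow> pt f g (x (t0 + s)) (t0 + s) \<noteq> pt f g i0 t0"
    and "t0 \<le> s0" "s0 < t0 + 1"
  shows "inj_on (\<lambda>m. x (s0 + real m)) {..<l}"
proof (rule inj_onI, rule ccontr)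
  fix p q assume "p \<in> {..<l}" "q \<in> {..<l}" "x (s0 + real p) = x (s0 + real q)" "p \<noteq> q"
  then obtain a b where ab: "a < b" "b < l" "x (s0 + real a) = x (s0 + real b)"
    by (metis lessThan_iff linorder_neqE_nat)
  define d where "d = b - a"
  have "x (s0 + real a + real d) = x (s0 + real a)" using ab by (simp add: d_def)
  then have per_d: "x (s + real d) = x s" if "s0 + real a \<le> s" for s
    using shift_run_period_from[OF x _ _ that] \<open>t0 \<le> s0\<close> by simp
  define s' where "s' = t0 + (real l - real d)"
  have "real a + real d + 1 \<le> real l" using ab by (simp add: d_def)
  then have "s0 + real a \<le> s'" using \<open>s0 < t0 + 1\<close> by (simp add: s'_def)
  then have "x s' = x (t0 + real l)" using per_d[of s'] by (simp add: s'_def)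
  also have "\<dots> = i0" using per shift_run_start[OF x] by simp
  finally have "pt f g (x s') s' = pt f g i0 (t0 + of_int (int l - int d))" by (simp add: s'_def)
  also have "\<dots> = pt f g i0 t0"
    by (rule pt_int_shift) (use shift_run_less[OF x order_refl] shift_run_start[OF x] in simp)
  moreover have "0 < real l - real d" "real l - real d < real l" using ab by (auto simp: d_def)
  ultimately show False using minimal s'_def by auto
qed

lemma card_ring_circles_le:
  assumes x: "shift_run c n E f g x t0 i0" and per: "\<forall>s\<ge>t0. x (s + real l) = x s" and "l > 0"
  shows "finite (ring_circles x t0 t)" "card (ring_circles x t0 t) \<le> l"
  using ring_circles_eq[OF assms] card_image_le[of "{..<l}"] by auto

lemma card_ring_circles_eq:
  assumes x: "shift_run c n E f g x t0 i0" and per: "\<forall>s\<ge>t0. x (s + real l) = x s" and "l > 0"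
    and minimal: "\<forall>s. 0 < s \<and> s < real l \<longrightarrow> pt f g (x (t0 + s)) (t0 + s) \<noteq> pt f g i0 t0"
  shows "card (ring_circles x t0 t) = l"
proof -
  have "t0 \<le> t + of_int \<lceil>t0 - t\<rceil>" "t + of_int \<lceil>t0 - t\<rceil> < t0 + 1"
    using ceiling_correct[of "t0 - t"] by linarith+
  from card_image[OF shift_run_inj_before_return[OF x per minimal this]] show ?thesis
    unfolding ring_circles_eq[OF x per \<open>l > 0\<close>] by simp
qed
end

locale partial_run = scs +
  fixes R :: "nat set" and init :: "nat \<Rightarrow> nat" and pos :: "nat \<Rightarrow> real \<Rightarrow> nat"
  assumes run: "partial_SCS_run c n E f g R init pos"
begin

lemma finite_robots: "finite R"
  using run by (simp add: partial_SCS_run_def)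

lemma inj_on_init: "inj_on init R"
  using run by (simp add: partial_SCS_run_def)

lemma init_less: "r \<in> R \<Longrightarrow> init r < n"
  using run by (auto simp: partial_SCS_run_def)

lemma pos_less: "r \<in> R \<Longrightarrow> 0 \<le> t \<Longrightarrow> pos r t < n"
  using run by (simp add: partial_SCS_run_def)

lemma pos_right_const: "r \<in> R \<Longrightarrow> 0 \<le> t \<Longrightarrow> right_const (pos r) t"
  using run by (simp add: partial_SCS_run_def)

lemma pos_left_const: "r \<in> R \<Longrightarrow> 0 < t \<Longrightarrow> \<exists>i. left_const (pos r) t i"
  using run by (simp add: partial_SCS_run_def)

definition prev :: "nat \<Rightarrow> real \<Rightarrow> nat" where
  "prev r t = (if t = 0 then init r else (THE i. left_const (pos r) t i))"

lemma prev_0 [simp]: "prev r 0 = init r"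
  by (simp add: prev_def)

lemma prev_left_const:
  assumes "r \<in> R" "0 < t"
  shows "left_const (pos r) t (prev r t)"
proof -
  obtain i where i: "left_const (pos r) t i" using pos_left_const assms by blast
  then have "(THE i. left_const (pos r) t i) = i" using left_const_unique by blast
  then show ?thesis using i assms(2) by (simp add: prev_def)
qed

lemma prior_iff_prev: "r \<in> R \<Longrightarrow> 0 \<le> t \<Longrightarrow> prior init pos r t i \<longleftrightarrow> i = prev r t"
proof (cases "t = 0")
  case False
  assume "r \<in> R" "0 \<le> t"
  then have "0 < t" using False by simp
  then show ?thesis
    using prev_left_const[OF \<open>r \<in> R\<close>] left_const_unique unfolding prior_def by blast
qed (simp add: prior_def)

lemma eventually_pos_eq_prev:
  assumes "0 < t"
  shows "eventually (\<lambda>s. \<forall>r\<in>R. pos r s = prev r t) (at_left t)"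
proof (rule eventually_ball_finite[OF finite_robots], rule ballI)
  fix r assume "r \<in> R"
  from prev_left_const[OF this assms] show "eventually (\<lambda>s. pos r s = prev r t) (at_left t)"
    by (simp add: left_const_iff_eventually)
qed

lemma eventually_pos_eq_pos:
  assumes "0 \<le> t"
  shows "eventually (\<lambda>s. \<forall>r\<in>R. pos r s = pos r t) (at_right t)"
proof (rule eventually_ball_finite[OF finite_robots], rule ballI)
  fix r assume "r \<in> R"
  from pos_right_const[OF this assms] show "eventually (\<lambda>s. pos r s = pos r t) (at_right t)"
    by (simp add: right_const_iff_eventually)
qed

lemma prev_less:
  assumes "r \<in> R" "0 \<le> t"
  shows "prev r t < n"
proof (cases "t = 0")
  case False
  then have "0 < t" using assms(2) by simp
  obtain s where "0 < s" "s < t" "\<forall>r\<in>R. pos r s = prev r t"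
    by (rule eventually_at_left_obtain[OF eventually_pos_eq_prev[OF \<open>0 < t\<close>] \<open>0 < t\<close>])
  then show ?thesis using pos_less[of r s] assms(1) by simp
qed (use assms init_less in simp)

lemma may_shift_iff:
  assumes "0 \<le> t"
  shows "may_shift c E f g R init pos t i j \<longleftrightarrow> active i t \<and> j = hop i t \<and> j \<notin> (\<lambda>r. prev r t) ` R"
proof
  assume ms: "may_shift c E f g R init pos t i j"
  then have e: "(i, j) \<in> E" "angeq (sched f g i t) (linkpos c i j)" by (auto simp: may_shift_def)
  then have "active i t" "j = hop i t" using hop_eqI by (auto simp: active_def)
  moreover have "j \<notin> (\<lambda>r. prev r t) ` R"
  proof
    assume "j \<in> (\<lambda>r. prev r t) ` R"
    then obtain r' where "r' \<in> R" "prior init pos r' t j" using prior_iff_prev assms by blast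
    moreover have "angeq (sched f g j t) (linkpos c j i)" using link_sync[OF e(1)] e(2) by simp
    ultimately show False using ms by (auto simp: may_shift_def)
  qed
  ultimately show "active i t \<and> j = hop i t \<and> j \<notin> (\<lambda>r. prev r t) ` R" by simp
next
  assume a: "active i t \<and> j = hop i t \<and> j \<notin> (\<lambda>r. prev r t) ` R"
  then have "(i, j) \<in> E" "angeq (sched f g i t) (linkpos c i j)" using active_hop by auto
  moreover have "\<not> (\<exists>r'\<in>R. prior init pos r' t j \<and> angeq (sched f g j t) (linkpos c j i))"
    using a prior_iff_prev assms by force
  ultimately show "may_shift c E f g R init pos t i j" by (simp add: may_shift_def)
qed

definition blocked :: "real \<Rightarrow> nat \<Rightarrow> bool" where
  "blocked t r \<longleftrightarrow> hop (prev r t) t \<in> (\<lambda>r'. prev r' t) ` R"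

text \<open>A robot that is not at a link position counts as blocked, since its \<open>hop\<close> is its own circle.\<close>
lemma pos_eq:
  assumes "r \<in> R" "0 \<le> t"
  shows "pos r t = (if blocked t r then prev r t else hop (prev r t) t)"
proof -
  let ?i = "prev r t"
  have protocol: "((\<exists>j. may_shift c E f g R init pos t ?i j) \<longrightarrow> may_shift c E f g R init pos t ?i (pos r t)) \<and>
      (\<not> (\<exists>j. may_shift c E f g R init pos t ?i j) \<longrightarrow> pos r t = ?i)"
    using run assms prior_iff_prev unfolding partial_SCS_run_def by blast
  have "?i \<in> (\<lambda>r'. prev r' t) ` R" using assms(1) by blast
  then have "blocked t r" if "\<not> active ?i t"
    using that by (simp add: hop_inactive blocked_def)
  then show ?thesis
    using protocol may_shift_iff[OF assms(2)] unfolding blocked_def by (cases "active ?i t") auto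
qed

definition swap :: "real \<Rightarrow> nat \<Rightarrow> nat" where
  "swap t r = (if blocked t r then (THE r'. r' \<in> R \<and> prev r' t = hop (prev r t) t) else r)"

context
  fixes t :: real
  assumes inj_prev: "inj_on (\<lambda>r. prev r t) R"
begin

lemma swap_blocked:
  assumes "r \<in> R" "blocked t r"
  shows "swap t r \<in> R \<and> prev (swap t r) t = hop (prev r t) t"
proof -
  obtain r' where r': "r' \<in> R" "prev r' t = hop (prev r t) t"
    using assms(2) by (auto simp: blocked_def)
  have uniq: "r'' = r'" if "r'' \<in> R" "prev r'' t = hop (prev r t) t" for r''
    using inj_onD[OF inj_prev _ that(1) r'(1)] that(2) r'(2) by simp
  have "(THE r'. r' \<in> R \<and> prev r' t = hop (prev r t) t) = r'"
  proof (rule the_equality)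
    show "r' \<in> R \<and> prev r' t = hop (prev r t) t" using r' by simp
  next
    fix r'' assume "r'' \<in> R \<and> prev r'' t = hop (prev r t) t"
    then show "r'' = r'" using uniq by blast
  qed
  then show ?thesis using assms(2) r' by (simp add: swap_def)
qed

lemma swap_in: "r \<in> R \<Longrightarrow> swap t r \<in> R"
  using swap_blocked by (cases "blocked t r") (simp_all add: swap_def)

lemma swap_swap:
  assumes "r \<in> R"
  shows "swap t (swap t r) = r"
proof (cases "blocked t r")
  case True
  then have r': "swap t r \<in> R" "prev (swap t r) t = hop (prev r t) t" using swap_blocked assms by auto
  then have "blocked t (swap t r)" using assms by (auto simp: blocked_def)
  then have "prev (swap t (swap t r)) t = prev r t" using swap_blocked[OF r'(1)] r' by simp
  then show ?thesis using inj_prev swap_in[OF r'(1)] assms by (auto dest: inj_onD)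
qed (simp add: swap_def)

text \<open>A blocked robot stays on its circle, which is exactly where its blocker would have hopped to;
  so the new configuration is the hop of the old one, permuted by the involution \<open>swap\<close>.\<close>
lemma pos_eq_hop_prev_swap:
  assumes "r \<in> R" "0 \<le> t"
  shows "pos r t = hop (prev (swap t r) t) t"
proof (cases "blocked t r")
  case True
  then show ?thesis using pos_eq[OF assms] swap_blocked[OF assms(1)] by simp
qed (simp add: pos_eq[OF assms] swap_def)

end

lemma configuration_induct [consumes 1, case_names cong init step]:
  assumes "0 \<le> t"
    and cong: "\<And>h h'. (\<And>r. r \<in> R \<Longrightarrow> h r = h' r) \<Longrightarrow> P h \<Longrightarrow> P h'"
    and init: "P init"
    and step: "\<And>\<sigma>. 0 \<le> \<sigma> \<Longrightarrow> P (\<lambda>r. prev r \<sigma>) \<Longrightarrow> P (\<lambda>r. pos r \<sigma>)"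
  shows "P (\<lambda>r. pos r t)"
  using \<open>0 \<le> t\<close>
proof (induction t rule: real_induct)
  case (left \<sigma>)
  have "P (\<lambda>r. prev r \<sigma>)"
  proof (cases "\<sigma> = 0")
    case False
    then have "0 < \<sigma>" using left(1) by simp
    obtain s where "0 < s" "s < \<sigma>" "\<forall>r\<in>R. pos r s = prev r \<sigma>"
      by (rule eventually_at_left_obtain[OF eventually_pos_eq_prev[OF \<open>0 < \<sigma>\<close>] \<open>0 < \<sigma>\<close>])
    then show ?thesis using left(2)[of s] cong[of "\<lambda>r. pos r s" "\<lambda>r. prev r \<sigma>"] by simp
  qed (simp add: init)
  then show ?case using step left(1) by blast
next
  case (right \<sigma>)
  show ?case using eventually_pos_eq_pos[OF right(1)]
    by eventually_elim (use right(2) cong[of "\<lambda>r. pos r \<sigma>"] in auto)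
qed

lemma inj_on_pos:
  assumes "0 \<le> t"
  shows "inj_on (\<lambda>r. pos r t) R"
  using assms
proof (induction rule: configuration_induct[where P = "\<lambda>h. inj_on h R"])
  case (cong h h')
  then show ?case using inj_on_cong[of R h h'] by simp
next
  case init
  show ?case by (rule inj_on_init)
next
  case (step \<sigma>)
  note inj_prev = step(2)
  show ?case
  proof (rule inj_onI)
    fix r1 r2 assume r: "r1 \<in> R" "r2 \<in> R" "pos r1 \<sigma> = pos r2 \<sigma>"
    then have "prev (swap \<sigma> r1) \<sigma> = prev (swap \<sigma> r2) \<sigma>"
      using pos_eq_hop_prev_swap[OF inj_prev _ step(1)] by simp
    then have "swap \<sigma> r1 = swap \<sigma> r2"
      using inj_onD[OF inj_prev] swap_in[OF inj_prev] r by blast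
    then show "r1 = r2" using swap_swap[OF inj_prev] r by metis
  qed
qed

lemma inj_on_prev:
  assumes "0 \<le> t"
  shows "inj_on (\<lambda>r. prev r t) R"
proof (cases "t = 0")
  case False
  then have "0 < t" using assms by simp
  obtain s where "0 < s" "s < t" "\<forall>r\<in>R. pos r s = prev r t"
    by (rule eventually_at_left_obtain[OF eventually_pos_eq_prev[OF \<open>0 < t\<close>] \<open>0 < t\<close>])
  then show ?thesis using inj_on_pos[of s] inj_on_cong[of R "\<lambda>r. pos r s" "\<lambda>r. prev r t"] by simp
qed (simp add: inj_on_init)

text \<open>In a full SCS every circle is occupied, so every robot is blocked whenever it reaches a
  link position.\<close>
lemma pos_eq_init_if_full:
  assumes full: "init ` R = {..<n}" and "0 \<le> t"
  shows "\<forall>r\<in>R. pos r t = init r"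
  using \<open>0 \<le> t\<close>
proof (induction rule: configuration_induct[where P = "\<lambda>h. \<forall>r\<in>R. h r = init r"])
  case (cong h h')
  then show ?case by simp
next
  case init
  show ?case by simp
next
  case (step \<sigma>)
  then have img: "(\<lambda>r. prev r \<sigma>) ` R = {..<n}" using full by (simp cong: image_cong)
  show ?case
  proof
    fix r assume "r \<in> R"
    then have "blocked \<sigma> r" unfolding blocked_def img using hop_less prev_less step(1) by simp
    then show "pos r \<sigma> = init r" using pos_eq[OF \<open>r \<in> R\<close> step(1)] step(2) \<open>r \<in> R\<close> by simp
  qed
qed

lemma quiet_interval_before:
  assumes "0 < \<sigma>"
  obtains u where "0 \<le> u" "u < \<sigma>" "\<forall>r\<in>R. pos r u = prev r \<sigma>"
    "\<And>k w. u < w \<Longrightarrow> w < \<sigma> \<Longrightarrow> \<not> active k w"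
proof -
  have "eventually (\<lambda>s. \<forall>k. \<not> active k s) (at_left \<sigma>)"
    using eventually_inactive[of \<sigma>] by (simp add: eventually_at_split)
  with eventually_pos_eq_prev[OF \<open>0 < \<sigma>\<close>]
  have "eventually (\<lambda>s. (\<forall>r\<in>R. pos r s = prev r \<sigma>) \<and> (\<forall>k. \<not> active k s)) (at_left \<sigma>)"
    by (rule eventually_conj)
  then obtain b where "b < \<sigma>"
    and near: "\<And>s. b < s \<Longrightarrow> s < \<sigma> \<Longrightarrow> (\<forall>r\<in>R. pos r s = prev r \<sigma>) \<and> (\<forall>k. \<not> active k s)"
    unfolding eventually_at_left_field by blast
  define u where "u = (max b 0 + \<sigma>) / 2"
  have u: "0 \<le> u" "b < u" "u < \<sigma>" using \<open>b < \<sigma>\<close> \<open>0 < \<sigma>\<close> by (auto simp: u_def)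
  show ?thesis
  proof (rule that[of u])
    show "\<forall>r\<in>R. pos r u = prev r \<sigma>" using near[of u] u by simp
    fix k w assume "u < w" "w < \<sigma>"
    then show "\<not> active k w" using near[of w] u by simp
  qed (use u in simp_all)
qed

lemma quiet_interval_after:
  assumes "0 \<le> \<sigma>"
  obtains b where "\<sigma> < b" "\<And>s. \<sigma> < s \<Longrightarrow> s < b \<Longrightarrow> (\<forall>r\<in>R. pos r s = pos r \<sigma>) \<and> (\<forall>k. \<not> active k s)"
proof -
  have "eventually (\<lambda>s. \<forall>k. \<not> active k s) (at_right \<sigma>)"
    using eventually_inactive[of \<sigma>] by (simp add: eventually_at_split)
  with eventually_pos_eq_pos[OF \<open>0 \<le> \<sigma>\<close>]
  have "eventually (\<lambda>s. (\<forall>r\<in>R. pos r s = pos r \<sigma>) \<and> (\<forall>k. \<not> active k s)) (at_right \<sigma>)"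
    by (rule eventually_conj)
  then show ?thesis using that unfolding eventually_at_right_field by blast
qed

lemma card_robots_in_at_left:
  assumes x: "shift_run c n E f g x t0 i0" and "0 < \<sigma>"
  obtains u where "0 \<le> u" "u < \<sigma>"
    "card (robots_in f g R pos (orbit f g x t0) u) = card (robots_in f g R pos (orbit f g x t0) \<sigma>)"
proof -
  let ?P = "orbit f g x t0"
  obtain u where u: "0 \<le> u" "u < \<sigma>" and pos_u: "\<forall>r\<in>R. pos r u = prev r \<sigma>"
    and inactive: "\<And>k w. u < w \<Longrightarrow> w < \<sigma> \<Longrightarrow> \<not> active k w"
    using quiet_interval_before[OF \<open>0 < \<sigma>\<close>] by blast
  have inj_prev: "inj_on (\<lambda>r. prev r \<sigma>) R" using inj_on_prev \<open>0 < \<sigma>\<close> by simp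
  have at_u: "r \<in> robots_in f g R pos ?P u \<longleftrightarrow> pt f g (hop (prev r \<sigma>) \<sigma>) \<sigma> \<in> ?P" if "r \<in> R" for r
    using orbit_hop[OF x \<open>u < \<sigma>\<close> inactive, of "prev r \<sigma>"] pos_u that by (simp add: robots_in_def)
  have at_\<sigma>: "r \<in> robots_in f g R pos ?P \<sigma> \<longleftrightarrow> swap \<sigma> r \<in> robots_in f g R pos ?P u" if "r \<in> R" for r
  proof -
    have "pos r \<sigma> = hop (prev (swap \<sigma> r) \<sigma>) \<sigma>"
      using pos_eq_hop_prev_swap[OF inj_prev that] \<open>0 < \<sigma>\<close> by simp
    then show ?thesis using at_u[OF swap_in[OF inj_prev that]] that by (simp add: robots_in_def)
  qed
  have eq: "robots_in f g R pos ?P \<sigma> = {r \<in> R. swap \<sigma> r \<in> robots_in f g R pos ?P u}"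
  proof (rule set_eqI)
    fix r
    show "r \<in> robots_in f g R pos ?P \<sigma> \<longleftrightarrow> r \<in> {r \<in> R. swap \<sigma> r \<in> robots_in f g R pos ?P u}"
    proof (cases "r \<in> R")
      case True
      then show ?thesis using at_\<sigma>[OF True] by simp
    qed (simp add: robots_in_def)
  qed
  have "card (robots_in f g R pos ?P \<sigma>) = card (robots_in f g R pos ?P u)"
    unfolding eq
  proof (rule card_preimage_involution)
    show "robots_in f g R pos ?P u \<subseteq> R" by (auto simp: robots_in_def)
  qed (simp_all add: swap_in[OF inj_prev] swap_swap[OF inj_prev])
  then show ?thesis using u by (intro that[of u]) simp_all
qed

lemma eventually_robots_in_at_right:
  assumes x: "shift_run c n E f g x t0 i0" and "0 \<le> \<sigma>"
  shows "eventually (\<lambda>s. robots_in f g R pos (orbit f g x t0) s = robots_in f g R pos (orbit f g x t0) \<sigma>)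
    (at_right \<sigma>)"
proof -
  obtain b where "\<sigma> < b"
    and near: "\<And>s. \<sigma> < s \<Longrightarrow> s < b \<Longrightarrow> (\<forall>r\<in>R. pos r s = pos r \<sigma>) \<and> (\<forall>k. \<not> active k s)"
    using quiet_interval_after[OF \<open>0 \<le> \<sigma>\<close>] by blast
  have "robots_in f g R pos (orbit f g x t0) s = robots_in f g R pos (orbit f g x t0) \<sigma>"
    if "\<sigma> < s" "s < b" for s
  proof -
    have "pt f g (pos r \<sigma>) \<sigma> \<in> orbit f g x t0 \<longleftrightarrow> pt f g (pos r \<sigma>) s \<in> orbit f g x t0" for r
      by (rule orbit_flow[OF x]) (use that near in auto)
    then show ?thesis using near that by (auto simp: robots_in_def)
  qed
  then show ?thesis unfolding eventually_at_right_field using \<open>\<sigma> < b\<close> by blast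
qed

lemma card_robots_in_const:
  assumes x: "shift_run c n E f g x t0 i0" and "0 \<le> t"
  shows "card (robots_in f g R pos (orbit f g x t0) t) = card (robots_in f g R pos (orbit f g x t0) 0)"
  using \<open>0 \<le> t\<close>
proof (induction t rule: real_induct)
  case (left \<sigma>)
  show ?case
  proof (cases "\<sigma> = 0")
    case False
    then have "0 < \<sigma>" using left(1) by simp
    then obtain u where "0 \<le> u" "u < \<sigma>"
      "card (robots_in f g R pos (orbit f g x t0) u) = card (robots_in f g R pos (orbit f g x t0) \<sigma>)"
      by (rule card_robots_in_at_left[OF x])
    then show ?thesis using left(2)[of u] by simp
  qed simp
next
  case (right \<sigma>)
  show ?case using eventually_robots_in_at_right[OF x right(1)]
    by eventually_elim (use right(2) in simp)
qed

lemma ring_count_invariant: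
  assumes "is_ring c n E f g P" "0 \<le> t1" "0 \<le> t2"
  shows "card (robots_in f g R pos P t1) = card (robots_in f g R pos P t2)"
proof -
  obtain i t0 x where x: "shift_run c n E f g x t0 i" and P: "P = orbit f g x t0"
    using assms(1) unfolding is_ring_def by blast
  show ?thesis
    unfolding P card_robots_in_const[OF x assms(2)] card_robots_in_const[OF x assms(3)] ..
qed

lemma ring_length_periodic:
  assumes "ring_length c n E f g P (2 * real l * pi)"
  obtains x t0 i where "shift_run c n E f g x t0 i" "P = orbit f g x t0"
    "\<forall>s\<ge>t0. x (s + real l) = x s"
    "\<forall>s. 0 < s \<and> s < real l \<longrightarrow> pt f g (x (t0 + s)) (t0 + s) \<noteq> pt f g i t0"
proof -
  obtain i t0 x T where i: "i < n" and x: "shift_run c n E f g x t0 i" and "P = orbit f g x t0"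
    and ret: "pt f g (x (t0 + T)) (t0 + T) = pt f g i t0"
    and first: "\<forall>s. 0 < s \<and> s < T \<longrightarrow> pt f g (x (t0 + s)) (t0 + s) \<noteq> pt f g i t0"
    and "2 * real l * pi = 2 * pi * T"
    using assms unfolding ring_length_def by blast
  moreover have "T = real l" using \<open>2 * real l * pi = 2 * pi * T\<close> by simp
  moreover have "x (t0 + real l) = x t0"
    using pt_eqD[OF ret[symmetric] i] shift_run_start[OF x] \<open>T = real l\<close> by simp
  then have "\<forall>s\<ge>t0. x (s + real l) = x s" using shift_run_period_from[OF x order_refl] by blast
  ultimately show ?thesis using that by blast
qed

lemma inj_on_pos_robots_in: "0 \<le> t \<Longrightarrow> inj_on (\<lambda>r. pos r t) (robots_in f g R pos P t)"
  using inj_on_pos by (rule inj_on_subset) (auto simp: robots_in_def)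

lemma pos_robots_in_subset: "(\<lambda>r. pos r t) ` robots_in f g R pos (orbit f g x t0) t \<subseteq> ring_circles x t0 t"
  by (auto simp: robots_in_def ring_circles_def)

lemma ring_count_le:
  assumes "ring_length c n E f g P (2 * real l * pi)" "0 < l" "0 \<le> t"
  shows "card (robots_in f g R pos P t) \<le> l"
proof -
  obtain x t0 i where x: "shift_run c n E f g x t0 i" and P: "P = orbit f g x t0"
    and per: "\<forall>s\<ge>t0. x (s + real l) = x s"
    by (rule ring_length_periodic[OF assms(1)])
  have "card (robots_in f g R pos P t) = card ((\<lambda>r. pos r t) ` robots_in f g R pos P t)"
    using card_image[OF inj_on_pos_robots_in[OF assms(3)]] by simp
  also have "\<dots> \<le> card (ring_circles x t0 t)"
    using card_mono[OF card_ring_circles_le(1)[OF x per \<open>0 < l\<close>] pos_robots_in_subset] P by simp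
  also have "\<dots> \<le> l" by (rule card_ring_circles_le(2)[OF x per \<open>0 < l\<close>])
  finally show ?thesis .
qed

lemma full_ring_count:
  assumes full: "init ` R = {..<n}" and "ring_length c n E f g P (2 * real l * pi)" "0 < l" "0 \<le> t"
  shows "card (robots_in f g R pos P t) = l"
proof -
  obtain x t0 i where x: "shift_run c n E f g x t0 i" and P: "P = orbit f g x t0"
    and per: "\<forall>s\<ge>t0. x (s + real l) = x s"
    and first: "\<forall>s. 0 < s \<and> s < real l \<longrightarrow> pt f g (x (t0 + s)) (t0 + s) \<noteq> pt f g i t0"
    by (rule ring_length_periodic[OF assms(2)])
  have init: "\<forall>r\<in>R. pos r t = init r" by (rule pos_eq_init_if_full[OF full \<open>0 \<le> t\<close>])
  have "(\<lambda>r. pos r t) ` robots_in f g R pos P t = ring_circles x t0 t"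
  proof
    show "(\<lambda>r. pos r t) ` robots_in f g R pos P t \<subseteq> ring_circles x t0 t"
      unfolding P by (rule pos_robots_in_subset)
    show "ring_circles x t0 t \<subseteq> (\<lambda>r. pos r t) ` robots_in f g R pos P t"
    proof
      fix k assume k: "k \<in> ring_circles x t0 t"
      then have "k < n" by (rule ring_circles_less[OF x])
      then obtain r where r: "r \<in> R" "k = pos r t" using full init by (metis imageE lessThan_iff)
      then have "r \<in> robots_in f g R pos P t" using k by (simp add: robots_in_def ring_circles_def P)
      then show "k \<in> (\<lambda>r. pos r t) ` robots_in f g R pos P t" using r(2) by blast
    qed
  qed
  then have "card (robots_in f g R pos P t) = card (ring_circles x t0 t)"
    using card_image[OF inj_on_pos_robots_in[OF assms(4), of P]] by simp
  then show ?thesis using card_ring_circles_eq[OF x per \<open>0 < l\<close> first] by simp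
qed

lemma robot_points_not_between:
  assumes "0 \<le> t" "0 < s" "s < 1"
  shows "pt f g k (t + s) \<notin> robot_points f g R pos t"
proof
  assume "pt f g k (t + s) \<in> robot_points f g R pos t"
  then obtain r where r: "r \<in> R" "pt f g (pos r t) t = pt f g k (t + s)"
    unfolding robot_points_def by auto
  obtain d :: int where "t + s = t + of_int d"
    using pt_eqD[OF r(2) pos_less[OF r(1) assms(1)]] by blast
  then have "0 < d" "d < 1" using assms(2,3) by linarith+
  then show False by simp
qed

lemma pt_after_one_in_robot_points:
  assumes full: "init ` R = {..<n}" and "0 \<le> t" "k < n"
  shows "pt f g k (t + 1) \<in> robot_points f g R pos t"
proof -
  obtain r where "r \<in> R" "k = init r" using full \<open>k < n\<close> by (metis imageE lessThan_iff)
  then have "k = pos r t" using pos_eq_init_if_full[OF full \<open>0 \<le> t\<close>] by simp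
  moreover have "pt f g k (t + of_int 1) = pt f g k t" by (rule pt_int_shift[OF \<open>k < n\<close>])
  ultimately show ?thesis using \<open>r \<in> R\<close> unfolding robot_points_def by auto
qed

lemma robot_spacing_if_full:
  assumes full: "init ` R = {..<n}" and "0 \<le> t" and x: "shift_run c n E f g x t k"
  shows "(\<forall>s. 0 < s \<and> s < 1 \<longrightarrow> pt f g (x (t + s)) (t + s) \<notin> robot_points f g R pos t) \<and>
    pt f g (x (t + 1)) (t + 1) \<in> robot_points f g R pos t"
proof -
  have "x (t + 1) < n" using shift_run_less[OF x, of "t + 1"] by simp
  then show ?thesis
    using robot_points_not_between[OF \<open>0 \<le> t\<close>] pt_after_one_in_robot_points[OF full \<open>0 \<le> t\<close>] by simp
qed

end

theorem lemma2:
  fixes c :: "nat \<Rightarrow> complex" and n :: nat and eps :: real and E :: "(nat \<times> nat) set"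
    and f g :: "nat \<Rightarrow> real" and R :: "nat set" and init :: "nat \<Rightarrow> nat"
    and pos :: "nat \<Rightarrow> real \<Rightarrow> nat"
  assumes "SCS_setting c n eps E f g"
    and "partial_SCS_run c n E f g R init pos"
  shows "(\<forall>P. is_ring c n E f g P \<longrightarrow>
            (\<forall>t1\<ge>0. \<forall>t2\<ge>0. card (robots_in f g R pos P t1) = card (robots_in f g R pos P t2)))
       \<and> (\<forall>P (l::nat). is_ring c n E f g P \<and> l > 0 \<and> ring_length c n E f g P (2 * real l * pi) \<longrightarrow>
            (\<forall>t\<ge>0. card (robots_in f g R pos P t) \<le> l))
       \<and> (init ` R = {..<n} \<longrightarrow>
            (\<forall>P (l::nat). is_ring c n E f g P \<and> l > 0 \<and> ring_length c n E f g P (2 * real l * pi) \<longrightarrow>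
              (\<forall>t\<ge>0. card (robots_in f g R pos P t) = l \<and>
                 (\<forall>r\<in>robots_in f g R pos P t. \<forall>x. shift_run c n E f g x t (pos r t) \<longrightarrow>
                    (\<forall>s. 0 < s \<and> s < 1 \<longrightarrow> pt f g (x (t + s)) (t + s) \<notin> robot_points f g R pos t) \<and>
                    pt f g (x (t + 1)) (t + 1) \<in> robot_points f g R pos t))))"
proof -
  interpret partial_run c n eps E f g R init pos
    using assms by unfold_locales auto
  show ?thesis
  proof (intro conjI allI impI)
    fix P and t1 t2 :: real assume "is_ring c n E f g P" "0 \<le> t1" "0 \<le> t2"
    then show "card (robots_in f g R pos P t1) = card (robots_in f g R pos P t2)"
      by (rule ring_count_invariant)
  next
    fix P and l :: nat and t :: real
    assume "is_ring c n E f g P \<and> 0 < l \<and> ring_length c n E f g P (2 * real l * pi)" "0 \<le> t"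
    then show "card (robots_in f g R pos P t) \<le> l" using ring_count_le by blast
  next
    fix P and l :: nat and t :: real assume "init ` R = {..<n}"
      "is_ring c n E f g P \<and> 0 < l \<and> ring_length c n E f g P (2 * real l * pi)" "0 \<le> t"
    then show "card (robots_in f g R pos P t) = l" using full_ring_count by blast
  qed (use robot_spacing_if_full in blast)
qed

end
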